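(* There exist instances (with three advertisers, a joint distribution of their values, information structures with and without the data, and a price of the data) of the two-stage game in which advertisers first simultaneously decide whether to purchase a data source and then bid optimally in a second-price auction, such that the purchase-stage game has no pure strategy equilibrium.
   Context: In the purchase stage each advertiser pays a fixed price for the data if she buys it; buying the data reveals (more) information about her value. Afterwards, each advertiser bids in a second-price auction given her information, and payoffs are expected auction utility minus the price paid for data. *)

theory Defs
  imports "HOL-Probability.Probability"
begin

text \<open>
Omega :: nat pmf             -- joint distribution of the state of the world (finite support)
  v i w                        -- value of advertiser i in state w
  sigN i w, sigD i w           -- signal observed by advertiser i without / with the data
  p                            -- price of the data
The set of advertisers is a finite set N (in the theorem N = {0,1,2}).
\<close>

definition signal_of :: "(nat \<Rightarrow> nat \<Rightarrow> nat) \<Rightarrow> (nat \<Rightarrow> nat \<Rightarrow> nat) \<Rightarrow> (nat \<Rightarrow> bool) \<Rightarrow> nat \<Rightarrow> nat \<Rightarrow> nat" where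
  "signal_of sigN sigD a i = (if a i then sigD i else sigN i)"

text \<open>Posterior expected value of advertiser i given her information; by weak dominance this
is her optimal bid in the second-price auction.\<close>
definition opt_bid :: "nat pmf \<Rightarrow> (nat \<Rightarrow> nat \<Rightarrow> real) \<Rightarrow> (nat \<Rightarrow> nat) \<Rightarrow> nat \<Rightarrow> nat \<Rightarrow> real" where
  "opt_bid Omega v sig i w =
     measure_pmf.expectation (cond_pmf Omega {w'. sig w' = sig w}) (v i)"

text \<open>Ex-post utility of advertiser i in a second-price auction with bids b and true value x;
ties among highest bidders are broken uniformly at random; the winner pays the highest
competing bid.\<close>
definition spa_utility :: "nat set \<Rightarrow> (nat \<Rightarrow> real) \<Rightarrow> nat \<Rightarrow> real \<Rightarrow> real" where
  "spa_utility N b i x =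
     (let W = {j \<in> N. b j = Max (b ` N)} in
      if i \<in> W then (x - Max (b ` (N - {i}))) / real (card W) else 0)"

definition purchase_payoff ::
  "nat set \<Rightarrow> nat pmf \<Rightarrow> (nat \<Rightarrow> nat \<Rightarrow> real) \<Rightarrow> (nat \<Rightarrow> nat \<Rightarrow> nat) \<Rightarrow> (nat \<Rightarrow> nat \<Rightarrow> nat)
     \<Rightarrow> real \<Rightarrow> (nat \<Rightarrow> bool) \<Rightarrow> nat \<Rightarrow> real" where
  "purchase_payoff N Omega v sigN sigD p a i =
     measure_pmf.expectation Omega
       (\<lambda>w. spa_utility N (\<lambda>j. opt_bid Omega v (signal_of sigN sigD a j) j w) i (v i w))
     - (if a i then p else 0)"

definition pure_NE ::
  "nat set \<Rightarrow> nat pmf \<Rightarrow> (nat \<Rightarrow> nat \<Rightarrow> real) \<Rightarrow> (nat \<Rightarrow> nat \<Rightarrow> nat) \<Rightarrow> (nat \<Rightarrow> nat \<Rightarrow> nat)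
     \<Rightarrow> real \<Rightarrow> (nat \<Rightarrow> bool) \<Rightarrow> bool" where
  "pure_NE N Omega v sigN sigD p a \<longleftrightarrow>
     (\<forall>i\<in>N. \<forall>d. purchase_payoff N Omega v sigN sigD p (a(i := d)) i
                \<le> purchase_payoff N Omega v sigN sigD p a i)"

definition data_refines :: "nat pmf \<Rightarrow> (nat \<Rightarrow> nat) \<Rightarrow> (nat \<Rightarrow> nat) \<Rightarrow> bool" where
  "data_refines Omega sD sN \<longleftrightarrow> (\<exists>g. \<forall>w\<in>set_pmf Omega. sN w = g (sD w))"

end

(*
  Two equally likely states: in state 0 only advertiser 2 values the slot (at 1), in state 1
  all three advertisers value it at 3. The data reveals the state and costs 1/8; uninformed
  advertisers bid their prior means 3/2, 3/2 and 2. Every one of the eight purchase profiles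
  admits a profitable unilateral deviation; in terms of the set of buyers, the deviations form
  the cycle {0,1,2} -> {0,1} -> {1} -> {1,2} -> {0,1,2}, into which all other profiles lead.
*)
theory Submission
  imports Defs
begin

lemma cond_pmf_UNIV: "cond_pmf M UNIV = M"
proof (rule pmf_eqI)
  fix x
  have "set_pmf M \<inter> UNIV \<noteq> {}" by (simp add: set_pmf_not_empty)
  then show "pmf (cond_pmf M UNIV) x = pmf M x"
    by (simp add: pmf_cond measure_pmf.prob_space)
qed

lemma cond_pmf_singleton:
  assumes "w \<in> set_pmf M"
  shows "cond_pmf M {w} = return_pmf w"
proof -
  have "set_pmf M \<inter> {w} \<noteq> {}" using assms by auto
  then have "set_pmf (cond_pmf M {w}) \<subseteq> {w}" by (simp add: set_cond_pmf)
  then show ?thesis by (simp add: set_pmf_subset_singleton)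
qed

lemma opt_bid_const_signal:
  assumes "\<And>w. sig w = c"
  shows "opt_bid M v sig i w = measure_pmf.expectation M (v i)"
  using assms by (simp add: opt_bid_def cond_pmf_UNIV)

lemma opt_bid_inj_signal:
  assumes "inj sig" and "w \<in> set_pmf M"
  shows "opt_bid M v sig i w = v i w"
proof -
  have "{w'. sig w' = sig w} = {w}" using assms(1) by (auto dest: injD)
  then show ?thesis by (simp add: opt_bid_def cond_pmf_singleton[OF assms(2)])
qed

lemma profitable_deviation_imp_not_pure_NE:
  assumes "i \<in> N"
    and "purchase_payoff N M v sigN sigD p a i < purchase_payoff N M v sigN sigD p (a(i := d)) i"
  shows "\<not> pure_NE N M v sigN sigD p a"
  using assms by (auto simp: pure_NE_def not_le)

definition two_states :: "nat pmf" where
  "two_states = pmf_of_set {0, 1}"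

definition example_value :: "nat \<Rightarrow> nat \<Rightarrow> real" where
  "example_value i w = (if w = 0 then (if i = 2 then 1 else 0) else 3)"

definition no_data :: "nat \<Rightarrow> nat \<Rightarrow> nat" where
  "no_data i w = 0"

definition full_data :: "nat \<Rightarrow> nat \<Rightarrow> nat" where
  "full_data i w = w"

lemma set_pmf_two_states [simp]: "set_pmf two_states = {0, 1}"
  by (simp add: two_states_def)

lemma expectation_two_states:
  "measure_pmf.expectation two_states (f :: nat \<Rightarrow> real) = (f 0 + f 1) / 2"
  by (simp add: two_states_def integral_pmf_of_set)

definition example_bids :: "(nat \<Rightarrow> bool) \<Rightarrow> nat \<Rightarrow> nat \<Rightarrow> real" where
  "example_bids a w j =
     (if a j then example_value j w else (example_value j 0 + example_value j 1) / 2)"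

lemma example_opt_bid:
  assumes "w \<in> {0, 1}"
  shows "opt_bid two_states example_value (signal_of no_data full_data a j) j w = example_bids a w j"
proof (cases "a j")
  case True
  have "inj (full_data j)" by (simp add: full_data_def inj_on_def)
  with True assms show ?thesis
    by (simp add: signal_of_def example_bids_def opt_bid_inj_signal)
next
  case False
  then show ?thesis
    by (simp add: signal_of_def example_bids_def no_data_def opt_bid_const_signal
        expectation_two_states)
qed

lemma example_payoff:
  "purchase_payoff N two_states example_value no_data full_data p a i =
     (spa_utility N (example_bids a 0) i (example_value i 0)
      + spa_utility N (example_bids a 1) i (example_value i 1)) / 2
     - (if a i then p else 0)"
  by (simp add: purchase_payoff_def expectation_two_states example_opt_bid)

lemma Collect_mem_three:
  "{j \<in> {0, 1, 2 :: nat}. P j} =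
     (if P 0 then {0} else {}) \<union> (if P 1 then {1} else {}) \<union> (if P 2 then {2} else {})"
  by (rule set_eqI) (auto split: if_splits; metis gr0I)

lemmas example_payoff_unfolded =
  example_payoff spa_utility_def Collect_mem_three Let_def

lemmas example_value_simps = example_bids_def example_value_def insert_Diff_if

lemma example_profitable_deviation:
  "\<exists>i\<in>{0, 1, 2}.
     purchase_payoff {0, 1, 2} two_states example_value no_data full_data (1/8) a i
     < purchase_payoff {0, 1, 2} two_states example_value no_data full_data (1/8) (a(i := \<not> a i)) i"
proof -
  \<comment> \<open>Unfolding with \<open>simp only\<close> first matters: the full simplifier on the folded
    payoffs takes minutes.\<close>
  have ?thesis if "a 0" "a 1" "a 2"
    using that by (intro bexI[of _ 2];
        simp only: example_payoff_unfolded; simp add: example_value_simps)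
  moreover have ?thesis if "a 0" "a 1" "\<not> a 2"
    using that by (intro bexI[of _ 0];
        simp only: example_payoff_unfolded; simp add: example_value_simps)
  moreover have ?thesis if "a 0" "\<not> a 1" "a 2"
    using that by (intro bexI[of _ 1];
        simp only: example_payoff_unfolded; simp add: example_value_simps)
  moreover have ?thesis if "a 0" "\<not> a 1" "\<not> a 2"
    using that by (intro bexI[of _ 2];
        simp only: example_payoff_unfolded; simp add: example_value_simps)
  moreover have ?thesis if "\<not> a 0" "a 1" "a 2"
    using that by (intro bexI[of _ 0];
        simp only: example_payoff_unfolded; simp add: example_value_simps)
  moreover have ?thesis if "\<not> a 0" "a 1" "\<not> a 2"
    using that by (intro bexI[of _ 2];
        simp only: example_payoff_unfolded; simp add: example_value_simps)
  moreover have ?thesis if "\<not> a 0" "\<not> a 1" "a 2"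
    using that by (intro bexI[of _ 0];
        simp only: example_payoff_unfolded; simp add: example_value_simps)
  moreover have ?thesis if "\<not> a 0" "\<not> a 1" "\<not> a 2"
    using that by (intro bexI[of _ 0];
        simp only: example_payoff_unfolded; simp add: example_value_simps)
  ultimately show ?thesis by (cases "a 0"; cases "a 1"; cases "a 2") simp_all
qed

lemma example_no_pure_NE:
  "\<not> pure_NE {0, 1, 2} two_states example_value no_data full_data (1/8) a"
proof -
  obtain i where "i \<in> {0, 1, 2}" and
    "purchase_payoff {0, 1, 2} two_states example_value no_data full_data (1/8) a i
     < purchase_payoff {0, 1, 2} two_states example_value no_data full_data (1/8) (a(i := \<not> a i)) i"
    using example_profitable_deviation ..
  then show ?thesis by (rule profitable_deviation_imp_not_pure_NE)
qed

theorem mainTheorem11: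
  shows "\<exists>(Omega :: nat pmf) (v :: nat \<Rightarrow> nat \<Rightarrow> real) (sigN :: nat \<Rightarrow> nat \<Rightarrow> nat)
            (sigD :: nat \<Rightarrow> nat \<Rightarrow> nat) (p :: real).
           finite (set_pmf Omega) \<and> p \<ge> 0 \<and>
           (\<forall>i\<in>{0,1,2}. \<forall>w\<in>set_pmf Omega. v i w \<ge> 0) \<and>
           (\<forall>i\<in>{0,1,2}. data_refines Omega (sigD i) (sigN i)) \<and>
           \<not> (\<exists>a. pure_NE {0,1,2} Omega v sigN sigD p a)"
proof (intro exI conjI)
  show "finite (set_pmf two_states)" by simp
  show "(0 :: real) \<le> 1/8" by simp
  show "\<forall>i\<in>{0,1,2}. \<forall>w\<in>set_pmf two_states. example_value i w \<ge> 0"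
    by (simp add: example_value_def)
  show "\<forall>i\<in>{0,1,2}. data_refines two_states (full_data i) (no_data i)"
    by (auto simp: data_refines_def no_data_def)
  show "\<not> (\<exists>a. pure_NE {0,1,2} two_states example_value no_data full_data (1/8) a)"
    using example_no_pure_NE by blast
qed

end
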